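(* Let $\Phi$ be a Leonard system in $\mathcal A$ with eigenvalue sequence $\theta_0,\dots,\theta_d$, and let $\nu$ and $c_1,\dots,c_d$ be as defined below. Then $$(\theta_0-\theta_1)(\theta_0-\theta_2)\cdots(\theta_0-\theta_d)=\nu\,c_1c_2\cdots c_d.$$
   Context: Let $\mathbb K$ be a field, $d\ge 0$ an integer, and $\mathcal A$ a $\mathbb K$-algebra isomorphic to $\mathrm{Mat}_{d+1}(\mathbb K)$, with identity $I$ and trace $\mathrm{tr}$. An element $A\in\mathcal A$ is multiplicity-free if it has $d+1$ mutually distinct eigenvalues in $\mathbb K$; if $\theta_0,\dots,\theta_d$ is an ordering of them, the primitive idempotent of $A$ associated with $\theta_i$ is $E_i=\prod_{j\ne i}(A-\theta_jI)/(\theta_i-\theta_j)$. A Leonard system in $\mathcal A$ is a sequence $\Phi=(A;A^*;\{E_i\}_{i=0}^d;\{E^*_i\}_{i=0}^d)$ such that: (i) $A,A^*$ are multiplicity-free; (ii) $E_0,\dots,E_d$ is an ordering of the primitive idempotents of $A$; (iii) $E^*_0,\dots,E^*_d$ is an ordering of those of $A^*$; (iv) $E_iA^*E_j=0$ if $|i-j|>1$ and $\ne0$ if $|i-j|=1$ $(0\le i,j\le d)$; (v) $E^*_iAE^*_j=0$ if $|i-j|>1$ and $\neq0$ if $|i-j|=1$ $(0\le i,j\le d)$. $\theta_i$ denotes the eigenvalue of $A$ associated with $E_i$ (eigenvalue sequence). One has $\mathrm{tr}(E_0E^*_0)\ne0$, and $\nu$ is defined by $\nu=\mathrm{tr}(E_0E^*_0)^{-1}$.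 Let $V$ be an irreducible $\mathcal A$-module and $u$ a nonzero vector in $E_0V$; then $E^*_0u,\dots,E^*_du$ is a basis of $V$ (a $\Phi$-standard basis). The matrix representing $A$ with respect to this basis is tridiagonal and does not depend on the choice of $V$ and $u$; for $1\le i\le d$, $c_i$ denotes its $(i,i-1)$ entry (rows and columns indexed $0,\dots,d$). *)

theory Defs
  imports "Jordan_Normal_Form.Char_Poly"
begin

text \<open>We realise the algebra A as the concrete matrix algebra of n x n matrices
  over a field, n = d + 1.\<close>

definition mat_tr :: "'a::comm_ring_1 mat \<Rightarrow> 'a" where
  "mat_tr M = (\<Sum>i<dim_row M. M $$ (i, i))"

definition mult_free :: "nat \<Rightarrow> 'a::field mat \<Rightarrow> bool" where
  "mult_free n M \<longleftrightarrow> M \<in> carrier_mat n n \<and> finite {k. eigenvalue M k}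
     \<and> card {k. eigenvalue M k} = n"

definition eig_ordering :: "nat \<Rightarrow> 'a::field mat \<Rightarrow> (nat \<Rightarrow> 'a) \<Rightarrow> bool" where
  "eig_ordering n M th \<longleftrightarrow> inj_on th {..<n} \<and> th ` {..<n} = {k. eigenvalue M k}"

definition prim_idem :: "nat \<Rightarrow> 'a::field mat \<Rightarrow> (nat \<Rightarrow> 'a) \<Rightarrow> nat \<Rightarrow> 'a mat" where
  "prim_idem n M th i =
     foldr (\<lambda>j P. ((1 / (th i - th j)) \<cdot>\<^sub>m (M - th j \<cdot>\<^sub>m 1\<^sub>m n)) * P)
       (filter (\<lambda>j. j \<noteq> i) [0..<n]) (1\<^sub>m n)"

definition idem_ordering :: "nat \<Rightarrow> 'a::field mat \<Rightarrow> (nat \<Rightarrow> 'a mat) \<Rightarrow> bool" where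
  "idem_ordering n M E \<longleftrightarrow>
     (\<exists>th. eig_ordering n M th \<and> (\<forall>i<n. E i = prim_idem n M th i))"

definition tridiag_cond :: "nat \<Rightarrow> (nat \<Rightarrow> 'a::field mat) \<Rightarrow> 'a mat \<Rightarrow> bool" where
  "tridiag_cond n E X \<longleftrightarrow> (\<forall>i<n. \<forall>j<n.
      (\<bar>int i - int j\<bar> > 1 \<longrightarrow> E i * X * E j = 0\<^sub>m n n) \<and>
      (\<bar>int i - int j\<bar> = 1 \<longrightarrow> E i * X * E j \<noteq> 0\<^sub>m n n))"

definition leonard_system ::
  "nat \<Rightarrow> 'a::field mat \<Rightarrow> 'a mat \<Rightarrow> (nat \<Rightarrow> 'a mat) \<Rightarrow> (nat \<Rightarrow> 'a mat) \<Rightarrow> bool" where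
  "leonard_system d A As E Es \<longleftrightarrow>
     mult_free (d+1) A \<and> mult_free (d+1) As \<and>
     idem_ordering (d+1) A E \<and> idem_ordering (d+1) As Es \<and>
     tridiag_cond (d+1) E As \<and> tridiag_cond (d+1) Es A"

definition represents_wrt :: "nat \<Rightarrow> 'a::field mat \<Rightarrow> (nat \<Rightarrow> 'a vec) \<Rightarrow> 'a mat \<Rightarrow> bool" where
  "represents_wrt n M vs B \<longleftrightarrow> B \<in> carrier_mat n n \<and>
     (\<forall>j<n. \<forall>k<n. (M *\<^sub>v vs j) $ k = (\<Sum>i<n. B $$ (i, j) * vs i $ k))"

end

theory Submission
  imports Defs
begin

(* Fix eigenbases P of A and Ps of A*, so that E_i and E*_i become the coordinate
   projections onto their columns.  In these coordinates condition (iv) makes the matrix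
   of A* with respect to the eigenbasis of A unreduced upper Hessenberg, and (v) does the
   same for A with respect to the eigenbasis of A*.  A nonzero left eigenvector of an
   unreduced Hessenberg matrix has a nonzero first entry; applied to the rows of the
   change of basis this shows that no E*_i u vanishes.  Hence the E*_i u form a basis in
   which A acts by B, and B is again unreduced upper Hessenberg, with subdiagonal
   c_1, ..., c_d.

   In that basis E*_0 u is the first basis vector and u has all coordinates 1.  Since
   E_0 = prod_{j>=1} (A - theta_j I) / (theta_0 - theta_j), the Hessenberg shape of B makes
   the last coordinate of E_0 E*_0 u equal to c_1 ... c_d / prod_{j>=1} (theta_0 - theta_j).
   On the other hand E_0 has rank one and u lies in E_0 V, so E_0 E*_0 u = tr (E_0 E*_0) u,
   whose last coordinate is tr (E_0 E*_0) = 1 / nu. *)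

lemma smult_mat_mult_vec:
  assumes "A \<in> carrier_mat nr nc" "v \<in> carrier_vec nc"
  shows "(c \<cdot>\<^sub>m A) *\<^sub>v v = c \<cdot>\<^sub>v (A *\<^sub>v v)"
  using assms by (intro eq_vecI) (auto simp: scalar_prod_def sum_distrib_left ac_simps)

lemma mult_unit_vec_eq_col:
  fixes A :: "'a::semiring_1 mat"
  assumes "A \<in> carrier_mat nr nc" "k < nc"
  shows "A *\<^sub>v unit_vec nc k = col A k"
  using assms
  by (intro eq_vecI) (auto simp: scalar_prod_def if_distrib[of "\<lambda>x. _ * x"] cong: if_cong)

lemma smult_vec_eq_0D:
  fixes c :: "'a::field"
  assumes "v \<in> carrier_vec n" "v \<noteq> 0\<^sub>v n" "c \<cdot>\<^sub>v v = 0\<^sub>v n"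
  shows "c = 0"
proof -
  obtain i where "i < n" "v $ i \<noteq> 0"
    using assms(1,2) by (metis carrier_vecD eq_vecI index_zero_vec)
  with assms show ?thesis
    by (metis carrier_vecD index_smult_vec(1) index_zero_vec(1) mult_eq_0_iff)
qed

lemma row_nonzero_if_right_inverse:
  fixes R :: "'a::comm_ring_1 mat"
  assumes R: "R \<in> carrier_mat n n" and S: "S \<in> carrier_mat n n" "R * S = 1\<^sub>m n" and i: "i < n"
  shows "row R i \<noteq> 0\<^sub>v n"
proof
  assume "row R i = 0\<^sub>v n"
  then have "(R * S) $$ (i, i) = 0"
    using R S(1) i by (simp add: col_carrier_vec)
  with S(2) i show False by simp
qed

lemma mat_tr_mult_comm:
  fixes A :: "'a::comm_ring_1 mat"
  assumes "A \<in> carrier_mat n m" "B \<in> carrier_mat m n"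
  shows "mat_tr (A * B) = mat_tr (B * A)"
proof -
  have "mat_tr (A * B) = (\<Sum>i<n. \<Sum>j<m. A $$ (i, j) * B $$ (j, i))"
    using assms by (simp add: mat_tr_def scalar_prod_def lessThan_atLeast0)
  also have "\<dots> = (\<Sum>j<m. \<Sum>i<n. B $$ (j, i) * A $$ (i, j))"
    by (subst sum.swap) (simp add: mult.commute)
  also have "\<dots> = mat_tr (B * A)"
    using assms by (simp add: mat_tr_def scalar_prod_def lessThan_atLeast0)
  finally show ?thesis .
qed

lemma mat_diag_sandwich:
  fixes Y :: "'a::semiring_1 mat"
  assumes Y: "Y \<in> carrier_mat n n"
  shows "mat_diag n f * Y * mat_diag n g = mat n n (\<lambda>(r, c). f r * Y $$ (r, c) * g c)"
proof -
  have "mat_diag n f * Y = mat n n (\<lambda>(r, c). f r * Y $$ (r, c))"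
    by (rule mat_diag_mult_left[OF Y])
  moreover have "mat n n (\<lambda>(r, c). f r * Y $$ (r, c)) * mat_diag n g
      = mat n n (\<lambda>(r, c). f r * Y $$ (r, c) * g c)"
    by (subst mat_diag_mult_right[of _ n]) auto
  ultimately show ?thesis by simp
qed

definition diag_unit :: "nat \<Rightarrow> nat \<Rightarrow> 'a::{zero,one} mat" where
  "diag_unit n k = mat_diag n (\<lambda>i. if i = k then 1 else 0)"

lemma diag_unit_carrier[simp]: "diag_unit n k \<in> carrier_mat n n"
  by (simp add: diag_unit_def)

lemma diag_unit_mult_vec:
  fixes y :: "'a::semiring_1 vec"
  assumes "y \<in> carrier_vec n" "k < n"
  shows "diag_unit n k *\<^sub>v y = y $ k \<cdot>\<^sub>v unit_vec n k"
  using assms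
  by (intro eq_vecI) (auto simp: diag_unit_def mat_diag_def scalar_prod_def
      if_distrib[of "\<lambda>x. x * _"] cong: if_cong)

lemma diag_unit_sandwich_eq_0_iff:
  fixes Y :: "'a::semiring_1 mat"
  assumes "Y \<in> carrier_mat n n" "i < n" "j < n"
  shows "diag_unit n i * Y * diag_unit n j = 0\<^sub>m n n \<longleftrightarrow> Y $$ (i, j) = 0"
proof -
  have "diag_unit n i * Y * diag_unit n j
      = mat n n (\<lambda>(r, c). if r = i \<and> c = j then Y $$ (i, j) else 0)"
    using assms by (auto simp: diag_unit_def mat_diag_sandwich intro!: eq_matI)
  moreover have "mat n n (\<lambda>(r, c). if r = i \<and> c = j then Y $$ (i, j) else 0) = 0\<^sub>m n n
      \<longleftrightarrow> Y $$ (i, j) = 0"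
    using assms by (auto simp: mat_eq_iff)
  ultimately show ?thesis by simp
qed

lemma diag_unit_sandwich_diag:
  fixes Y :: "'a::comm_semiring_1 mat"
  assumes "Y \<in> carrier_mat n n"
  shows "diag_unit n k * Y * diag_unit n k = Y $$ (k, k) \<cdot>\<^sub>m diag_unit n k"
  unfolding diag_unit_def mat_diag_sandwich[OF assms]
  using assms by (auto simp: mat_diag_def intro!: eq_matI)

lemma mat_tr_diag_unit_mult:
  fixes Y :: "'a::comm_ring_1 mat"
  assumes "Y \<in> carrier_mat n n" "k < n"
  shows "mat_tr (diag_unit n k * Y) = Y $$ (k, k)"
  using assms
  by (simp add: mat_tr_def diag_unit_def mat_diag_mult_left if_distrib[of "\<lambda>x. x * _"] cong: if_cong)

section \<open>Lagrange products\<close>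

definition lagrange_prod :: "nat \<Rightarrow> 'a::field mat \<Rightarrow> (nat \<Rightarrow> 'a) \<Rightarrow> nat \<Rightarrow> nat list \<Rightarrow> 'a mat" where
  "lagrange_prod n M th i L =
     foldr (\<lambda>j P. ((1 / (th i - th j)) \<cdot>\<^sub>m (M - th j \<cdot>\<^sub>m 1\<^sub>m n)) * P) L (1\<^sub>m n)"

lemma prim_idem_eq_lagrange_prod:
  "prim_idem n M th i = lagrange_prod n M th i (filter (\<lambda>j. j \<noteq> i) [0..<n])"
  by (simp add: prim_idem_def lagrange_prod_def)

lemma prim_idem_0_eq_lagrange_prod:
  "prim_idem (Suc d) M th 0 = lagrange_prod (Suc d) M th 0 [1..<Suc d]"
proof -
  have "filter (\<lambda>j. j \<noteq> 0) [0..<Suc d] = [1..<Suc d]"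
    by (induction d) auto
  then show ?thesis by (simp only: prim_idem_eq_lagrange_prod)
qed

lemma lagrange_prod_Nil[simp]: "lagrange_prod n M th i [] = 1\<^sub>m n"
  by (simp add: lagrange_prod_def)

lemma lagrange_prod_Cons:
  "lagrange_prod n M th i (j # L) =
     ((1 / (th i - th j)) \<cdot>\<^sub>m (M - th j \<cdot>\<^sub>m 1\<^sub>m n)) * lagrange_prod n M th i L"
  by (simp add: lagrange_prod_def)

lemma lagrange_prod_carrier[simp]:
  "M \<in> carrier_mat n n \<Longrightarrow> lagrange_prod n M th i L \<in> carrier_mat n n"
  by (induction L) (auto simp: lagrange_prod_Cons minus_carrier_mat)

lemma lagrange_factor_mult_vec:
  fixes M :: "'a::field mat"
  assumes "M \<in> carrier_mat n n" "x \<in> carrier_vec n"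
  shows "(c \<cdot>\<^sub>m (M - s \<cdot>\<^sub>m 1\<^sub>m n)) *\<^sub>v x = c \<cdot>\<^sub>v (M *\<^sub>v x - s \<cdot>\<^sub>v x)"
proof -
  have "(M - s \<cdot>\<^sub>m 1\<^sub>m n) *\<^sub>v x = M *\<^sub>v x - (s \<cdot>\<^sub>m 1\<^sub>m n) *\<^sub>v x"
    using assms by (simp add: minus_mult_distrib_mat_vec[of _ n n])
  also have "(s \<cdot>\<^sub>m 1\<^sub>m n) *\<^sub>v x = s \<cdot>\<^sub>v x"
    using assms by (simp add: smult_mat_mult_vec[of _ n n])
  finally show ?thesis
    using assms by (simp add: smult_mat_mult_vec[of _ n n] minus_carrier_mat)
qed

lemma lagrange_prod_Cons_mult_vec:
  fixes M :: "'a::field mat"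
  assumes "M \<in> carrier_mat n n" "x \<in> carrier_vec n"
  shows "lagrange_prod n M th i (j # L) *\<^sub>v x = (1 / (th i - th j)) \<cdot>\<^sub>v
    (M *\<^sub>v (lagrange_prod n M th i L *\<^sub>v x) - th j \<cdot>\<^sub>v (lagrange_prod n M th i L *\<^sub>v x))"
proof -
  have fac: "(1 / (th i - th j)) \<cdot>\<^sub>m (M - th j \<cdot>\<^sub>m 1\<^sub>m n) \<in> carrier_mat n n"
    by (simp add: minus_carrier_mat)
  have y: "lagrange_prod n M th i L *\<^sub>v x \<in> carrier_vec n"
    using assms by (simp add: mult_mat_vec_carrier[OF lagrange_prod_carrier])
  show ?thesis
    unfolding lagrange_prod_Cons assoc_mult_mat_vec[OF fac lagrange_prod_carrier[OF assms(1)] assms(2)]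
    by (rule lagrange_factor_mult_vec[OF assms(1) y])
qed

lemma lagrange_prod_eigenvector:
  fixes M :: "'a::field mat"
  assumes M: "M \<in> carrier_mat n n" and x: "x \<in> carrier_vec n" and Mx: "M *\<^sub>v x = t \<cdot>\<^sub>v x"
  shows "lagrange_prod n M th i L *\<^sub>v x = (\<Prod>j\<leftarrow>L. (t - th j) / (th i - th j)) \<cdot>\<^sub>v x"
proof (induction L)
  case (Cons j L)
  let ?p = "\<Prod>j\<leftarrow>L. (t - th j) / (th i - th j)"
  have "lagrange_prod n M th i (j # L) *\<^sub>v x
      = (1 / (th i - th j)) \<cdot>\<^sub>v (M *\<^sub>v (?p \<cdot>\<^sub>v x) - th j \<cdot>\<^sub>v (?p \<cdot>\<^sub>v x))"
    unfolding lagrange_prod_Cons_mult_vec[OF M x] Cons ..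
  also have "M *\<^sub>v (?p \<cdot>\<^sub>v x) = ?p \<cdot>\<^sub>v (t \<cdot>\<^sub>v x)"
    using M x Mx by (simp add: mult_mat_vec)
  finally show ?case
    using x by (intro eq_vecI) (auto simp: field_simps)
qed (use x in simp)

lemma lagrange_prod_intertwine:
  fixes M N V :: "'a::field mat"
  assumes M: "M \<in> carrier_mat n n" and N: "N \<in> carrier_mat m m" and V: "V \<in> carrier_mat n m"
    and MV: "M * V = V * N"
  shows "lagrange_prod n M th i L * V = V * lagrange_prod m N th i L"
proof (induction L)
  case (Cons j L)
  let ?c = "1 / (th i - th j)"
  have fac: "?c \<cdot>\<^sub>m (M - th j \<cdot>\<^sub>m 1\<^sub>m n) \<in> carrier_mat n n"
    by (simp add: minus_carrier_mat)
  have shift: "(M - th j \<cdot>\<^sub>m 1\<^sub>m n) * V = V * (N - th j \<cdot>\<^sub>m 1\<^sub>m m)"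
  proof -
    have "V * (th j \<cdot>\<^sub>m 1\<^sub>m m) = th j \<cdot>\<^sub>m (V * 1\<^sub>m m)"
      by (rule mult_smult_distrib[OF V one_carrier_mat])
    then have "V * (th j \<cdot>\<^sub>m 1\<^sub>m m) = th j \<cdot>\<^sub>m V"
      using V by simp
    then show ?thesis
      using M N V MV by (simp add: minus_mult_distrib_mat[of _ n n] mult_minus_distrib_mat[of _ n m]
          mult_smult_assoc_mat[of _ n n])
  qed
  have "lagrange_prod n M th i (j # L) * V
      = (?c \<cdot>\<^sub>m (M - th j \<cdot>\<^sub>m 1\<^sub>m n)) * (lagrange_prod n M th i L * V)"
    using M V fac by (simp add: lagrange_prod_Cons assoc_mult_mat[of _ n n _ n _ m])
  also have "\<dots> = ((?c \<cdot>\<^sub>m (M - th j \<cdot>\<^sub>m 1\<^sub>m n)) * V) * lagrange_prod m N th i L"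
    using M N V Cons fac by (simp add: assoc_mult_mat[of _ n n _ m _ m])
  also have "(?c \<cdot>\<^sub>m (M - th j \<cdot>\<^sub>m 1\<^sub>m n)) * V = ?c \<cdot>\<^sub>m ((M - th j \<cdot>\<^sub>m 1\<^sub>m n) * V)"
    using V by (simp add: mult_smult_assoc_mat[of _ n n V m] minus_carrier_mat)
  also have "\<dots> = V * (?c \<cdot>\<^sub>m (N - th j \<cdot>\<^sub>m 1\<^sub>m m))"
    using V shift by (simp add: mult_smult_distrib[of V n m _ m] minus_carrier_mat)
  also have "\<dots> * lagrange_prod m N th i L = V * lagrange_prod m N th i (j # L)"
    using N V by (simp add: lagrange_prod_Cons assoc_mult_mat[of _ n m _ m _ m] minus_carrier_mat)
  finally show ?case .
qed (use M N V in simp)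

section \<open>Upper Hessenberg matrices\<close>

definition upper_hessenberg :: "nat \<Rightarrow> 'a::zero mat \<Rightarrow> bool" where
  "upper_hessenberg n T \<longleftrightarrow> (\<forall>i<n. \<forall>j<n. j + 1 < i \<longrightarrow> T $$ (i, j) = 0)"

definition unreduced_hessenberg :: "nat \<Rightarrow> 'a::zero mat \<Rightarrow> bool" where
  "unreduced_hessenberg n T \<longleftrightarrow>
     upper_hessenberg n T \<and> (\<forall>k. k + 1 < n \<longrightarrow> T $$ (k + 1, k) \<noteq> 0)"

lemma mult_mat_vec_index_sum:
  assumes "T \<in> carrier_mat n n" "x \<in> carrier_vec n" "i < n"
  shows "(T *\<^sub>v x) $ i = (\<Sum>c<n. T $$ (i, c) * x $ c)"
  using assms by (simp add: scalar_prod_def lessThan_atLeast0)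

lemma upper_hessenberg_mult_vec:
  fixes T :: "'a::semiring_0 mat"
  assumes T: "T \<in> carrier_mat n n" "upper_hessenberg n T"
    and x: "x \<in> carrier_vec n" "\<forall>i<n. m < i \<longrightarrow> x $ i = 0" and m: "m + 1 < n"
  shows "\<forall>i<n. m + 1 < i \<longrightarrow> (T *\<^sub>v x) $ i = 0"
    and "(T *\<^sub>v x) $ (m + 1) = T $$ (m + 1, m) * x $ m"
proof -
  show "\<forall>i<n. m + 1 < i \<longrightarrow> (T *\<^sub>v x) $ i = 0"
  proof (intro allI impI)
    fix i assume i: "i < n" "m + 1 < i"
    have "T $$ (i, c) * x $ c = 0" if "c < n" for c
    proof (cases "c + 1 < i")
      case True then show ?thesis using T(2) i that unfolding upper_hessenberg_def by simp
    next
      case False then show ?thesis using x(2) i that by simp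
    qed
    then show "(T *\<^sub>v x) $ i = 0"
      by (simp add: mult_mat_vec_index_sum[OF T(1) x(1) i(1)])
  qed
  have "T $$ (m + 1, c) * x $ c = 0" if "c < n" "c \<noteq> m" for c
  proof (cases "c < m")
    case True then show ?thesis using T(2) m that unfolding upper_hessenberg_def by simp
  next
    case False then show ?thesis using x(2) that by simp
  qed
  then have "(\<Sum>c\<in>{..<n} - {m}. T $$ (m + 1, c) * x $ c) = 0"
    by (intro sum.neutral) auto
  then show "(T *\<^sub>v x) $ (m + 1) = T $$ (m + 1, m) * x $ m"
    using m by (simp add: mult_mat_vec_index_sum[OF T(1) x(1)] sum.remove[of "{..<n}" m])
qed

lemma unreduced_hessenberg_left_eigenvector:
  fixes T :: "'a::idom mat"
  assumes T: "T \<in> carrier_mat n n" "unreduced_hessenberg n T"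
    and r: "r \<in> carrier_vec n" "\<forall>j<n. r \<bullet> col T j = c * r $ j" "r $ 0 = 0"
  shows "r = 0\<^sub>v n"
proof -
  have "\<forall>k\<le>j. r $ k = 0" if "j < n" for j
    using that
  proof (induction j)
    case (Suc j)
    have IH: "\<forall>k\<le>j. r $ k = 0" using Suc by simp
    have "r $ k * T $$ (k, j) = 0" if "k < n" "k \<noteq> j + 1" for k
    proof (cases "k \<le> j")
      case False then show ?thesis
        using T(2) Suc.prems that unfolding unreduced_hessenberg_def upper_hessenberg_def by simp
    qed (use IH in simp)
    then have rest: "(\<Sum>k\<in>{..<n} - {j + 1}. r $ k * T $$ (k, j)) = 0"
      by (intro sum.neutral) auto
    have "r $ (j + 1) * T $$ (j + 1, j) = r \<bullet> col T j"
      using T(1) r(1) Suc.prems rest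
      by (simp add: scalar_prod_def lessThan_atLeast0[symmetric] sum.remove[of "{..<n}" "j + 1"])
    also have "\<dots> = 0"
      using r(2) IH Suc.prems by simp
    finally have "r $ (j + 1) = 0"
      using T(2) Suc.prems unfolding unreduced_hessenberg_def by simp
    then show ?case
      using IH le_Suc_eq by auto
  qed (use r(3) in simp)
  then show ?thesis
    using r(1) by (intro eq_vecI) auto
qed

lemma lagrange_prod_upper_hessenberg_mult_vec:
  fixes T :: "'a::field mat"
  assumes T: "T \<in> carrier_mat n n" "upper_hessenberg n T"
    and x: "x \<in> carrier_vec n" "\<forall>k<n. 0 < k \<longrightarrow> x $ k = 0" and L: "length L < n"
  shows "(\<forall>k<n. length L < k \<longrightarrow> (lagrange_prod n T th i L *\<^sub>v x) $ k = 0) \<and>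
    (lagrange_prod n T th i L *\<^sub>v x) $ length L =
      (\<Prod>j\<leftarrow>L. 1 / (th i - th j)) * (\<Prod>k = 1..length L. T $$ (k, k - 1)) * x $ 0"
  using L
proof (induction L)
  case (Cons j L)
  let ?y = "lagrange_prod n T th i L *\<^sub>v x"
  have y: "?y \<in> carrier_vec n"
    using x(1) by (simp add: mult_mat_vec_carrier[OF lagrange_prod_carrier[OF T(1)]])
  have IH: "\<forall>k<n. length L < k \<longrightarrow> ?y $ k = 0"
    "?y $ length L = (\<Prod>j\<leftarrow>L. 1 / (th i - th j)) * (\<Prod>k = 1..length L. T $$ (k, k - 1)) * x $ 0"
    using Cons by auto
  have m: "length L + 1 < n" using Cons.prems by simp
  have entry: "(lagrange_prod n T th i (j # L) *\<^sub>v x) $ k =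
      1 / (th i - th j) * ((T *\<^sub>v ?y) $ k - th j * ?y $ k)" if "k < n" for k
    using that carrier_vecD[OF y] T(1)
    by (simp add: lagrange_prod_Cons_mult_vec[OF T(1) x(1)])
  note step = upper_hessenberg_mult_vec[OF T y IH(1) m]
  have prod: "(\<Prod>k = 1..length L + 1. T $$ (k, k - 1))
      = (\<Prod>k = 1..length L. T $$ (k, k - 1)) * T $$ (length L + 1, length L)"
    by (simp add: prod.nat_ivl_Suc')
  show ?case
  proof (intro conjI allI impI)
    fix k assume "k < n" "length (j # L) < k"
    then show "(lagrange_prod n T th i (j # L) *\<^sub>v x) $ k = 0"
      using entry[of k] step(1) IH(1) by simp
  next
    show "(lagrange_prod n T th i (j # L) *\<^sub>v x) $ length (j # L) =
      (\<Prod>j\<leftarrow>j # L. 1 / (th i - th j)) * (\<Prod>k = 1..length (j # L). T $$ (k, k - 1)) * x $ 0"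
      using entry[of "length L + 1"] step(2) IH m prod by (simp add: mult_ac)
  qed
qed (use x in simp)

section \<open>Spectral bases\<close>

lemma prim_idem_carrier[simp]: "M \<in> carrier_mat n n \<Longrightarrow> prim_idem n M th k \<in> carrier_mat n n"
  by (simp add: prim_idem_eq_lagrange_prod)

lemma prim_idem_mult_eigenvector:
  fixes M :: "'a::field mat"
  assumes M: "M \<in> carrier_mat n n" and inj: "inj_on th {..<n}" and "i < n" "k < n"
    and x: "x \<in> carrier_vec n" "M *\<^sub>v x = th i \<cdot>\<^sub>v x"
  shows "prim_idem n M th k *\<^sub>v x = (if i = k then x else 0\<^sub>v n)"
proof -
  let ?L = "filter (\<lambda>j. j \<noteq> k) [0..<n]"
  let ?f = "\<lambda>j. (th i - th j) / (th k - th j)"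
  have "prim_idem n M th k *\<^sub>v x = (\<Prod>j\<leftarrow>?L. ?f j) \<cdot>\<^sub>v x"
    unfolding prim_idem_eq_lagrange_prod by (rule lagrange_prod_eigenvector[OF M x])
  also have "(\<Prod>j\<leftarrow>?L. ?f j) = (\<Prod>j\<in>{..<n} - {k}. ?f j)"
    by (subst prod.distinct_set_conv_list[symmetric]) (auto intro: prod.cong)
  also have "\<dots> = (if i = k then 1 else 0)"
  proof (cases "i = k")
    case True
    have "th k \<noteq> th j" if "j \<in> {..<n} - {k}" for j
      using inj \<open>k < n\<close> that by (auto dest: inj_onD)
    then have "\<forall>j\<in>{..<n} - {k}. ?f j = 1" using True by simp
    then show ?thesis using True by (simp add: prod.neutral)
  next
    case False
    then have "i \<in> {..<n} - {k}" "?f i = 0" using \<open>i < n\<close> by auto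
    then show ?thesis using False by auto
  qed
  finally show ?thesis using x by auto
qed

definition spectral_basis :: "nat \<Rightarrow> 'a::field mat \<Rightarrow> (nat \<Rightarrow> 'a) \<Rightarrow> 'a mat \<Rightarrow> 'a mat \<Rightarrow> bool" where
  "spectral_basis n M th P Q \<longleftrightarrow>
     M \<in> carrier_mat n n \<and> P \<in> carrier_mat n n \<and> Q \<in> carrier_mat n n \<and>
     P * Q = 1\<^sub>m n \<and> Q * P = 1\<^sub>m n \<and> M * P = P * mat_diag n th \<and>
     (\<forall>k<n. prim_idem n M th k = P * diag_unit n k * Q)"

lemma eigenvector_cols_mult:
  fixes M P :: "'a::field mat"
  assumes M: "M \<in> carrier_mat n n" and P: "P \<in> carrier_mat n n" and inj: "inj_on th {..<n}"
    and eig: "\<And>k. k < n \<Longrightarrow> M *\<^sub>v col P k = th k \<cdot>\<^sub>v col P k"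
  shows "M * P = P * mat_diag n th"
    and "k < n \<Longrightarrow> prim_idem n M th k * P = P * diag_unit n k"
proof -
  have entry: "(X * P) $$ (r, c) = (X *\<^sub>v col P c) $ r"
    if "X \<in> carrier_mat n n" "r < n" "c < n" for X r c
    using that P by simp
  have diag: "(P * mat_diag n f) $$ (r, c) = f c * col P c $ r" if "r < n" "c < n" for f r c
    using that P by (simp add: mat_diag_mult_right[OF P])
  show "M * P = P * mat_diag n th"
  proof (rule eq_matI)
    fix r c assume "r < dim_row (P * mat_diag n th)" "c < dim_col (P * mat_diag n th)"
    then have rc: "r < n" "c < n" using carrier_matD[OF P] by (simp_all add: mat_diag_def)
    show "(M * P) $$ (r, c) = (P * mat_diag n th) $$ (r, c)"
      unfolding entry[OF M rc] diag[OF rc] eig[OF rc(2)] using P rc by simp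
  qed (use M carrier_matD[OF P] in \<open>simp_all add: mat_diag_def\<close>)
  assume k: "k < n"
  show "prim_idem n M th k * P = P * diag_unit n k"
  proof (rule eq_matI)
    fix r c assume "r < dim_row (P * diag_unit n k)" "c < dim_col (P * diag_unit n k)"
    then have rc: "r < n" "c < n" using carrier_matD[OF P] by (simp_all add: diag_unit_def mat_diag_def)
    have "col P c \<in> carrier_vec n" using P rc by (simp add: col_carrier_vec)
    then show "(prim_idem n M th k * P) $$ (r, c) = (P * diag_unit n k) $$ (r, c)"
      unfolding entry[OF prim_idem_carrier[OF M] rc] diag_unit_def diag[OF rc]
      using prim_idem_mult_eigenvector[OF M inj rc(2) k _ eig[OF rc(2)]] rc by simp
  qed (use carrier_matD[OF prim_idem_carrier[OF M]] carrier_matD[OF P] in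
      \<open>simp_all add: diag_unit_def mat_diag_def\<close>)
qed

lemma eigenvector_cols_det_nonzero:
  fixes M P :: "'a::field mat"
  assumes M: "M \<in> carrier_mat n n" and P: "P \<in> carrier_mat n n" and inj: "inj_on th {..<n}"
    and eig: "\<And>k. k < n \<Longrightarrow> M *\<^sub>v col P k = th k \<cdot>\<^sub>v col P k"
    and nonzero: "\<And>k. k < n \<Longrightarrow> col P k \<noteq> 0\<^sub>v n"
  shows "det P \<noteq> 0"
proof
  assume "det P = 0"
  then obtain z where z: "z \<in> carrier_vec n" "z \<noteq> 0\<^sub>v n" "P *\<^sub>v z = 0\<^sub>v n"
    using det_0_iff_vec_prod_zero_field[OF P] by auto
  have "z $ k = 0" if k: "k < n" for k
  proof -
    have "z $ k \<cdot>\<^sub>v col P k = P *\<^sub>v (diag_unit n k *\<^sub>v z)"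
      using P k z(1) by (simp add: diag_unit_mult_vec mult_mat_vec mult_unit_vec_eq_col)
    also have "\<dots> = (P * diag_unit n k) *\<^sub>v z"
      by (rule assoc_mult_mat_vec[OF P diag_unit_carrier z(1), symmetric])
    also have "\<dots> = (prim_idem n M th k * P) *\<^sub>v z"
      using eigenvector_cols_mult(2)[OF M P inj eig k] by simp
    also have "\<dots> = prim_idem n M th k *\<^sub>v (P *\<^sub>v z)"
      by (rule assoc_mult_mat_vec[OF prim_idem_carrier[OF M] P z(1)])
    also have "\<dots> = 0\<^sub>v n"
      unfolding z(3) using carrier_matD[OF prim_idem_carrier[OF M]]
      by (intro eq_vecI) (auto simp: scalar_prod_def)
    finally show ?thesis
      using P k nonzero[OF k] by (intro smult_vec_eq_0D[of "col P k" n]) (simp_all add: col_carrier_vec)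
  qed
  then have "z = 0\<^sub>v n" using z(1) by (intro eq_vecI) auto
  with z(2) show False ..
qed

lemma spectral_basis_exists:
  fixes M :: "'a::field mat"
  assumes M: "M \<in> carrier_mat n n" and th: "eig_ordering n M th"
  obtains P Q where "spectral_basis n M th P Q"
proof -
  have inj: "inj_on th {..<n}" and ev: "\<forall>i<n. eigenvalue M (th i)"
    using th unfolding eig_ordering_def by auto
  obtain p where "\<And>k. k < n \<Longrightarrow> eigenvector M (p k) (th k)"
    using ev unfolding eigenvalue_def by metis
  then have p: "p k \<in> carrier_vec n" "p k \<noteq> 0\<^sub>v n" "M *\<^sub>v p k = th k \<cdot>\<^sub>v p k" if "k < n" for k
    using M that unfolding eigenvector_def by auto
  define P where "P = mat n n (\<lambda>(r, c). p c $ r)"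
  have P: "P \<in> carrier_mat n n" by (simp add: P_def)
  have colP: "col P k = p k" if "k < n" for k
    using p[OF that] that unfolding P_def by (intro eq_vecI) auto
  have eig: "M *\<^sub>v col P k = th k \<cdot>\<^sub>v col P k" if "k < n" for k
    using p(3)[OF that] colP[OF that] by simp
  have "det P \<noteq> 0"
    using p(2) colP by (intro eigenvector_cols_det_nonzero[OF M P inj eig]) auto
  then have "P \<in> Units (ring_mat TYPE('a) n ())" by (rule det_non_zero_imp_unit[OF P])
  then obtain Q where Q: "Q \<in> carrier_mat n n" "P * Q = 1\<^sub>m n" "Q * P = 1\<^sub>m n"
    unfolding Units_def ring_mat_def by auto
  have "prim_idem n M th k = P * diag_unit n k * Q" if "k < n" for k
  proof -
    have "prim_idem n M th k = prim_idem n M th k * (P * Q)"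
      using Q(2) by (simp add: right_mult_one_mat[OF prim_idem_carrier[OF M]])
    also have "\<dots> = P * diag_unit n k * Q"
      using M P Q(1)
      by (simp flip: eigenvector_cols_mult(2)[OF M P inj eig that] assoc_mult_mat[of _ n n _ n _ n])
    finally show ?thesis .
  qed
  then show ?thesis
    using that M P Q eigenvector_cols_mult(1)[OF M P inj eig] unfolding spectral_basis_def by blast
qed


context
  fixes n :: nat and M :: "'a::field mat" and th :: "nat \<Rightarrow> 'a" and P Q :: "'a mat"
  assumes basis: "spectral_basis n M th P Q"
begin

lemma spectral_basis_carrier:
  "M \<in> carrier_mat n n" "P \<in> carrier_mat n n" "Q \<in> carrier_mat n n"
  using basis unfolding spectral_basis_def by auto

lemma spectral_basis_inverse: "P * Q = 1\<^sub>m n" "Q * P = 1\<^sub>m n"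
  using basis unfolding spectral_basis_def by auto

lemma spectral_basis_prim_idem: "k < n \<Longrightarrow> prim_idem n M th k = P * diag_unit n k * Q"
  using basis unfolding spectral_basis_def by auto

lemma spectral_basis_cancel:
  assumes "X \<in> carrier_mat n n"
  shows "P * (Q * X) = X" "Q * (P * X) = X"
  using assms spectral_basis_carrier spectral_basis_inverse
  by (simp_all flip: assoc_mult_mat[of _ n n _ n X n])

lemmas spectral_basis_simps = spectral_basis_carrier mult_carrier_mat[of _ n n _ n]
  assoc_mult_mat[of _ n n _ n _ n]

lemma spectral_basis_eigen: "M * P = P * mat_diag n th"
  using basis unfolding spectral_basis_def by auto

lemma spectral_basis_left_eigen: "Q * M = mat_diag n th * Q"
proof -
  have "Q * M = Q * (M * P) * Q"
    using spectral_basis_inverse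
    by (simp add: spectral_basis_simps right_mult_one_mat[OF spectral_basis_carrier(1)])
  also have "\<dots> = (Q * P) * mat_diag n th * Q"
    by (simp add: spectral_basis_eigen spectral_basis_simps)
  finally show ?thesis
    using spectral_basis_inverse by (simp add: left_mult_one_mat[OF mat_diag_dim])
qed

lemma spectral_basis_prim_idem_mult_vec:
  assumes "k < n" "y \<in> carrier_vec n"
  shows "prim_idem n M th k *\<^sub>v y = (Q *\<^sub>v y) $ k \<cdot>\<^sub>v col P k"
proof -
  have "prim_idem n M th k *\<^sub>v y = P *\<^sub>v (diag_unit n k *\<^sub>v (Q *\<^sub>v y))"
    using assms by (simp add: spectral_basis_prim_idem spectral_basis_simps
        assoc_mult_mat_vec[of _ n n _ n])
  also have "\<dots> = (Q *\<^sub>v y) $ k \<cdot>\<^sub>v col P k"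
    using assms spectral_basis_carrier
    by (simp add: diag_unit_mult_vec mult_mat_vec mult_unit_vec_eq_col)
  finally show ?thesis .
qed

lemma spectral_basis_prim_idem_sandwich:
  assumes "X \<in> carrier_mat n n" "i < n" "j < n"
  shows "prim_idem n M th i * X * prim_idem n M th j
    = P * (diag_unit n i * (Q * X * P) * diag_unit n j) * Q"
  using assms by (simp add: spectral_basis_prim_idem spectral_basis_simps)

lemma spectral_basis_prim_idem_sandwich_eq_0_iff:
  assumes X: "X \<in> carrier_mat n n" and "i < n" "j < n"
  shows "prim_idem n M th i * X * prim_idem n M th j = 0\<^sub>m n n \<longleftrightarrow> (Q * X * P) $$ (i, j) = 0"
proof -
  define S where "S = diag_unit n i * (Q * X * P) * diag_unit n j"
  have S: "S \<in> carrier_mat n n" using X by (simp add: S_def spectral_basis_simps)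
  have "P * S * Q = 0\<^sub>m n n \<longleftrightarrow> S = 0\<^sub>m n n"
  proof
    assume "P * S * Q = 0\<^sub>m n n"
    then have "Q * (P * S * Q) * P = 0\<^sub>m n n" using spectral_basis_carrier by simp
    moreover have "Q * (P * S * Q) * P = (Q * P) * S * (Q * P)"
      using S by (simp add: spectral_basis_simps)
    ultimately show "S = 0\<^sub>m n n"
      using S spectral_basis_inverse by simp
  qed (use spectral_basis_carrier in simp)
  also have "S = 0\<^sub>m n n \<longleftrightarrow> (Q * X * P) $$ (i, j) = 0"
    unfolding S_def using assms by (intro diag_unit_sandwich_eq_0_iff) (simp_all add: spectral_basis_simps)
  finally show ?thesis
    using assms by (simp add: spectral_basis_prim_idem_sandwich S_def)
qed

lemma spectral_basis_prim_idem_sandwich_diag: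
  assumes X: "X \<in> carrier_mat n n" and k: "k < n"
  shows "prim_idem n M th k * X * prim_idem n M th k = (Q * X * P) $$ (k, k) \<cdot>\<^sub>m prim_idem n M th k"
proof -
  define c where "c = (Q * X * P) $$ (k, k)"
  have "diag_unit n k * (Q * X * P) * diag_unit n k = c \<cdot>\<^sub>m diag_unit n k"
    unfolding c_def using X by (intro diag_unit_sandwich_diag) (simp add: spectral_basis_simps)
  then have "prim_idem n M th k * X * prim_idem n M th k = P * (c \<cdot>\<^sub>m diag_unit n k) * Q"
    using spectral_basis_prim_idem_sandwich[OF X k k] by simp
  also have "\<dots> = c \<cdot>\<^sub>m prim_idem n M th k"
    using k spectral_basis_carrier
    by (simp add: spectral_basis_prim_idem mult_smult_distrib[of _ n n _ n] mult_smult_assoc_mat[of _ n n _ n])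
  finally show ?thesis unfolding c_def .
qed

lemma spectral_basis_mat_tr:
  assumes X: "X \<in> carrier_mat n n" and k: "k < n"
  shows "mat_tr (prim_idem n M th k * X) = (Q * X * P) $$ (k, k)"
proof -
  have "mat_tr (prim_idem n M th k * X) = mat_tr (P * (diag_unit n k * Q * X))"
    using assms by (simp add: spectral_basis_prim_idem spectral_basis_simps)
  also have "\<dots> = mat_tr (diag_unit n k * Q * X * P)"
    using X by (intro mat_tr_mult_comm[of _ n n]) (simp_all add: spectral_basis_simps)
  also have "diag_unit n k * Q * X * P = diag_unit n k * (Q * X * P)"
    using X by (simp add: spectral_basis_simps)
  finally show ?thesis
    using X k by (simp add: mat_tr_diag_unit_mult spectral_basis_simps)
qed

lemma spectral_basis_prim_idem_sandwich_trace:
  assumes "X \<in> carrier_mat n n" "k < n"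
  shows "prim_idem n M th k * X * prim_idem n M th k
    = mat_tr (prim_idem n M th k * X) \<cdot>\<^sub>m prim_idem n M th k"
  using assms by (simp add: spectral_basis_prim_idem_sandwich_diag spectral_basis_mat_tr)

lemma tridiag_cond_unreduced_hessenberg:
  assumes X: "X \<in> carrier_mat n n" and E: "\<forall>k<n. E k = prim_idem n M th k"
    and tri: "tridiag_cond n E X"
  shows "unreduced_hessenberg n (Q * X * P)"
  unfolding unreduced_hessenberg_def upper_hessenberg_def
proof (intro conjI allI impI)
  fix i j assume "i < n" "j < n" "j + 1 < i"
  then show "(Q * X * P) $$ (i, j) = 0"
    using tri E spectral_basis_prim_idem_sandwich_eq_0_iff[OF X] unfolding tridiag_cond_def by auto
next
  fix k assume "k + 1 < n"
  then show "(Q * X * P) $$ (k + 1, k) \<noteq> 0"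
    using tri E spectral_basis_prim_idem_sandwich_eq_0_iff[OF X] unfolding tridiag_cond_def
    by (metis add_lessD1 of_nat_1 of_nat_add abs_of_nat add_diff_cancel_left')
qed

end

section \<open>Leonard systems in coordinates\<close>

lemma represents_wrt_mult:
  assumes "represents_wrt n M vs B" "M \<in> carrier_mat n n" "V \<in> carrier_mat n n"
    and "\<forall>j<n. col V j = vs j"
  shows "M * V = V * B"
proof (rule eq_matI)
  fix k j assume "k < dim_row (V * B)" "j < dim_col (V * B)"
  then have kj: "k < n" "j < n" using assms(1,3) unfolding represents_wrt_def by auto
  have "(M * V) $$ (k, j) = (M *\<^sub>v col V j) $ k"
    using assms(2,3) kj by simp
  also have "\<dots> = (\<Sum>i<n. B $$ (i, j) * vs i $ k)"
    using assms(1,4) kj unfolding represents_wrt_def by simp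
  also have "\<dots> = (V * B) $$ (k, j)"
  proof -
    have "V $$ (k, i) = vs i $ k" if "i < n" for i
      using assms(3,4) kj that by (metis carrier_matD index_col)
    moreover have "B \<in> carrier_mat n n" using assms(1) unfolding represents_wrt_def by simp
    ultimately show ?thesis
      using carrier_matD[OF assms(3)] kj
      by (simp add: scalar_prod_def lessThan_atLeast0 mult.commute)
  qed
  finally show "(M * V) $$ (k, j) = (V * B) $$ (k, j)" .
qed (use assms in \<open>auto simp: represents_wrt_def\<close>)

locale leonard_frame =
  fixes d :: nat and A As :: "'a::field mat" and th ths :: "nat \<Rightarrow> 'a" and P Q Ps Qs :: "'a mat"
  assumes basis: "spectral_basis (Suc d) A th P Q"
    and dual_basis: "spectral_basis (Suc d) As ths Ps Qs"
    and hessenberg: "unreduced_hessenberg (Suc d) (Qs * A * Ps)"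
    and dual_hessenberg: "unreduced_hessenberg (Suc d) (Q * As * P)"
begin

lemmas frame_carrier = spectral_basis_carrier[OF basis] spectral_basis_carrier[OF dual_basis]

lemmas frame_simps = frame_carrier mult_carrier_mat[of _ "Suc d" "Suc d" _ "Suc d"]
  assoc_mult_mat[of _ "Suc d" "Suc d" _ "Suc d" _ "Suc d"]
  spectral_basis_cancel[OF basis] spectral_basis_cancel[OF dual_basis]

lemma dual_change_of_basis_left_eigen:
  "(Qs * P) * (Q * As * P) = mat_diag (Suc d) ths * (Qs * P)"
proof -
  have "(Qs * P) * (Q * As * P) = (Qs * As) * P"
    by (simp add: frame_simps)
  also have "\<dots> = mat_diag (Suc d) ths * (Qs * P)"
    unfolding spectral_basis_left_eigen[OF dual_basis] by (simp add: frame_simps)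
  finally show ?thesis .
qed

(* Row i of Qs * P is a nonzero left eigenvector of the unreduced Hessenberg matrix
   Q * As * P, so its first entry cannot vanish. *)
lemma dual_change_of_basis_col_0_nonzero:
  assumes i: "i \<le> d"
  shows "(Qs * P) $$ (i, 0) \<noteq> 0"
proof
  assume zero: "(Qs * P) $$ (i, 0) = 0"
  define R where "R = Qs * P"
  have R: "R \<in> carrier_mat (Suc d) (Suc d)" by (simp add: R_def frame_simps)
  have "R * (Q * As * P) = mat_diag (Suc d) ths * R"
    unfolding R_def by (rule dual_change_of_basis_left_eigen)
  then have "row R i \<bullet> col (Q * As * P) j = ths i * row R i $ j" if "j < Suc d" for j
    using R i that index_mult_mat(1)[of i "R" j "Q * As * P"] carrier_matD[OF frame_carrier(2)]
    by (simp add: mat_diag_mult_left[OF R] frame_simps)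
  moreover have "row R i \<in> carrier_vec (Suc d)"
    using i by (intro row_carrier_vec[OF _ R]) simp
  moreover have "row R i $ 0 = 0"
    using carrier_matD[OF R] zero i unfolding R_def by simp
  ultimately have "row R i = 0\<^sub>v (Suc d)"
    by (intro unreduced_hessenberg_left_eigenvector[OF _ dual_hessenberg, where c = "ths i"])
      (simp_all add: frame_simps)
  moreover have "row R i \<noteq> 0\<^sub>v (Suc d)"
  proof (rule row_nonzero_if_right_inverse[OF R])
    show "Q * Ps \<in> carrier_mat (Suc d) (Suc d)" "R * (Q * Ps) = 1\<^sub>m (Suc d)"
      using spectral_basis_inverse[OF dual_basis] by (simp_all add: R_def frame_simps)
  qed (use i in simp)
  ultimately show False by simp
qed

lemma dual_coord_prim_idem_0_nonzero:
  assumes w: "w \<in> carrier_vec (Suc d)" and u: "prim_idem (Suc d) A th 0 *\<^sub>v w \<noteq> 0\<^sub>v (Suc d)"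
    and i: "i \<le> d"
  shows "(Qs *\<^sub>v (prim_idem (Suc d) A th 0 *\<^sub>v w)) $ i \<noteq> 0"
proof -
  define \<beta> where "\<beta> = (Q *\<^sub>v w) $ 0"
  have col: "col P 0 \<in> carrier_vec (Suc d)"
    by (simp add: col_carrier_vec[OF _ frame_carrier(2)])
  have u_eq: "prim_idem (Suc d) A th 0 *\<^sub>v w = \<beta> \<cdot>\<^sub>v col P 0"
    unfolding \<beta>_def by (rule spectral_basis_prim_idem_mult_vec[OF basis _ w]) simp
  have "\<beta> \<noteq> 0"
  proof
    assume "\<beta> = 0"
    then have "prim_idem (Suc d) A th 0 *\<^sub>v w = 0\<^sub>v (Suc d)"
      unfolding u_eq using carrier_vecD[OF col] by (intro eq_vecI) auto
    with u show False ..
  qed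
  moreover have "(Qs *\<^sub>v (\<beta> \<cdot>\<^sub>v col P 0)) $ i = \<beta> * (Qs * P) $$ (i, 0)"
    using col i frame_carrier by (simp add: mult_mat_vec[of _ "Suc d" "Suc d"])
  ultimately show ?thesis
    unfolding u_eq using dual_change_of_basis_col_0_nonzero[OF i] by simp
qed

(* The columns of standard_mat u are the Phi-standard basis vectors E*_i u. *)
definition standard_mat :: "'a vec \<Rightarrow> 'a mat" where
  "standard_mat u = Ps * mat_diag (Suc d) (\<lambda>i. (Qs *\<^sub>v u) $ i)"

lemma standard_mat_carrier: "standard_mat u \<in> carrier_mat (Suc d) (Suc d)"
  by (simp add: standard_mat_def frame_simps)

lemma col_standard_mat:
  assumes "u \<in> carrier_vec (Suc d)" "i \<le> d"
  shows "col (standard_mat u) i = prim_idem (Suc d) As ths i *\<^sub>v u"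
  using assms frame_carrier
  by (intro eq_vecI) (auto simp: spectral_basis_prim_idem_mult_vec[OF dual_basis] standard_mat_def
      mat_diag_mult_right[OF frame_carrier(5)])

lemma dual_standard_mat: "Qs * standard_mat u = mat_diag (Suc d) (\<lambda>i. (Qs *\<^sub>v u) $ i)"
  by (simp add: standard_mat_def frame_simps)

lemma represents_wrt_standard_mat:
  assumes "represents_wrt (Suc d) A vs B" "u \<in> carrier_vec (Suc d)"
    and "\<forall>i\<le>d. vs i = prim_idem (Suc d) As ths i *\<^sub>v u"
  shows "A * standard_mat u = standard_mat u * B"
  using assms by (intro represents_wrt_mult[OF assms(1) frame_carrier(1) standard_mat_carrier])
    (simp add: col_standard_mat less_Suc_eq_le)

lemma standard_mat_unreduced_hessenberg:
  assumes "A * standard_mat u = standard_mat u * B" "B \<in> carrier_mat (Suc d) (Suc d)"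
    and z: "\<forall>i\<le>d. (Qs *\<^sub>v u) $ i \<noteq> 0"
  shows "unreduced_hessenberg (Suc d) B"
proof -
  define D where "D = mat_diag (Suc d) (\<lambda>i. (Qs *\<^sub>v u) $ i)"
  define T where "T = Qs * A * Ps"
  have Tc: "T \<in> carrier_mat (Suc d) (Suc d)" by (simp add: T_def frame_simps)
  have "T * D = Qs * (A * standard_mat u)"
    by (simp add: T_def D_def standard_mat_def frame_simps)
  also have "\<dots> = D * B"
    using assms(1,2) by (simp add: D_def dual_standard_mat[symmetric] standard_mat_carrier frame_simps)
  finally have TD: "T * D = D * B" .
  have entry: "T $$ (i, j) * (Qs *\<^sub>v u) $ j = (Qs *\<^sub>v u) $ i * B $$ (i, j)"
    if "i < Suc d" "j < Suc d" for i j
  proof -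
    have "(T * D) $$ (i, j) = (D * B) $$ (i, j)" unfolding TD ..
    then show ?thesis
      using that by (simp add: D_def mat_diag_mult_left[OF assms(2)] mat_diag_mult_right[OF Tc])
  qed
  show ?thesis
    using hessenberg z entry unfolding unreduced_hessenberg_def upper_hessenberg_def T_def
    by (metis (no_types, lifting) less_Suc_eq_le mult_eq_0_iff add_lessD1)
qed

lemma prim_idem_0_mult_dual_prim_idem_0:
  assumes w: "w \<in> carrier_vec (Suc d)" and u: "u = prim_idem (Suc d) A th 0 *\<^sub>v w"
  shows "prim_idem (Suc d) A th 0 *\<^sub>v (prim_idem (Suc d) As ths 0 *\<^sub>v u)
    = mat_tr (prim_idem (Suc d) A th 0 * prim_idem (Suc d) As ths 0) \<cdot>\<^sub>v u"
proof -
  let ?E = "prim_idem (Suc d) A th 0" and ?Es = "prim_idem (Suc d) As ths 0"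
  have E: "?E \<in> carrier_mat (Suc d) (Suc d)" and Es: "?Es \<in> carrier_mat (Suc d) (Suc d)"
    using frame_carrier by simp_all
  have "?E *\<^sub>v (?Es *\<^sub>v u) = (?E * ?Es * ?E) *\<^sub>v w"
    using u w E Es by (simp add: frame_simps assoc_mult_mat_vec[of _ "Suc d" "Suc d" _ "Suc d"])
  also have "\<dots> = mat_tr (?E * ?Es) \<cdot>\<^sub>v u"
    unfolding spectral_basis_prim_idem_sandwich_trace[OF basis Es zero_less_Suc] u
    using E w by (simp add: smult_mat_mult_vec)
  finally show ?thesis .
qed

lemma mat_tr_eq_lagrange_prod_coord:
  assumes w: "w \<in> carrier_vec (Suc d)" and u: "u = prim_idem (Suc d) A th 0 *\<^sub>v w" "u \<noteq> 0\<^sub>v (Suc d)"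
    and AB: "A * standard_mat u = standard_mat u * B" "B \<in> carrier_mat (Suc d) (Suc d)"
  shows "mat_tr (prim_idem (Suc d) A th 0 * prim_idem (Suc d) As ths 0)
    = (lagrange_prod (Suc d) B th 0 [1..<Suc d] *\<^sub>v unit_vec (Suc d) 0) $ d"
proof -
  let ?E = "prim_idem (Suc d) A th 0" and ?Es = "prim_idem (Suc d) As ths 0"
  define F where "F = lagrange_prod (Suc d) B th 0 [1..<Suc d]"
  let ?V = "standard_mat u"
  have Fc: "F \<in> carrier_mat (Suc d) (Suc d)" using AB(2) by (simp add: F_def)
  define \<tau> where "\<tau> = mat_tr (?E * ?Es)"
  have uc: "u \<in> carrier_vec (Suc d)"
    unfolding u by (rule mult_mat_vec_carrier[OF prim_idem_carrier[OF frame_carrier(1)] w])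
  have E: "?E \<in> carrier_mat (Suc d) (Suc d)"
    using frame_carrier by simp
  have EV: "?E * ?V = ?V * F"
    unfolding prim_idem_0_eq_lagrange_prod F_def
    by (rule lagrange_prod_intertwine[OF frame_carrier(1) AB(2) standard_mat_carrier AB(1)])
  have E_col: "?E *\<^sub>v col ?V 0 = \<tau> \<cdot>\<^sub>v u"
    unfolding \<tau>_def col_standard_mat[OF uc le0] by (rule prim_idem_0_mult_dual_prim_idem_0[OF w u(1)])
  have "(Qs * (?E * ?V)) $$ (d, 0) = (Qs *\<^sub>v col (?E * ?V) 0) $ d"
    using carrier_matD[OF frame_carrier(6)] carrier_matD[OF standard_mat_carrier] E by simp
  also have "\<dots> = \<tau> * (Qs *\<^sub>v u) $ d"
    using E_col uc frame_carrier(6) by (simp add: col_mult2[OF E standard_mat_carrier] mult_mat_vec)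
  finally have "(Qs * (?E * ?V)) $$ (d, 0) = \<tau> * (Qs *\<^sub>v u) $ d" .
  moreover have "Qs * (?V * F) = mat_diag (Suc d) (\<lambda>i. (Qs *\<^sub>v u) $ i) * F"
    unfolding dual_standard_mat[symmetric]
    by (rule assoc_mult_mat[OF frame_carrier(6) standard_mat_carrier Fc, symmetric])
  then have "(Qs * (?V * F)) $$ (d, 0) = (Qs *\<^sub>v u) $ d * F $$ (d, 0)"
    by (simp add: mat_diag_mult_left[OF Fc])
  moreover have "(Qs *\<^sub>v u) $ d \<noteq> 0"
    using dual_coord_prim_idem_0_nonzero[OF w] u by simp
  ultimately show ?thesis
    unfolding \<tau>_def[symmetric] F_def[symmetric] EV mult_unit_vec_eq_col[OF Fc zero_less_Suc]
    using Fc by simp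
qed

lemma eigenvalue_gap_product:
  assumes w: "w \<in> carrier_vec (Suc d)"
    and u: "u = prim_idem (Suc d) A th 0 *\<^sub>v w" "u \<noteq> 0\<^sub>v (Suc d)"
    and B: "represents_wrt (Suc d) A vs B" and vs: "\<forall>i\<le>d. vs i = prim_idem (Suc d) As ths i *\<^sub>v u"
  shows "(\<Prod>i\<in>{1..d}. th 0 - th i) =
    inverse (mat_tr (prim_idem (Suc d) A th 0 * prim_idem (Suc d) As ths 0))
      * (\<Prod>i\<in>{1..d}. B $$ (i, i - 1))"
proof -
  have uc: "u \<in> carrier_vec (Suc d)"
    unfolding u by (rule mult_mat_vec_carrier[OF prim_idem_carrier[OF frame_carrier(1)] w])
  have Bc: "B \<in> carrier_mat (Suc d) (Suc d)"
    using B unfolding represents_wrt_def by simp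
  have AB: "A * standard_mat u = standard_mat u * B"
    by (rule represents_wrt_standard_mat[OF B uc vs])
  have hess: "unreduced_hessenberg (Suc d) B"
    using standard_mat_unreduced_hessenberg[OF AB Bc] dual_coord_prim_idem_0_nonzero[OF w] u by simp
  have "mat_tr (prim_idem (Suc d) A th 0 * prim_idem (Suc d) As ths 0)
      = (\<Prod>j\<leftarrow>[1..<Suc d]. 1 / (th 0 - th j)) * (\<Prod>k = 1..d. B $$ (k, k - 1))"
    using mat_tr_eq_lagrange_prod_coord[OF w u AB Bc]
      lagrange_prod_upper_hessenberg_mult_vec[OF Bc _ unit_vec_carrier, where L = "[1..<Suc d]" and th = th and i = 0] hess
    unfolding unreduced_hessenberg_def by (simp del: upt_Suc)
  also have "(\<Prod>j\<leftarrow>[1..<Suc d]. 1 / (th 0 - th j)) = (\<Prod>j\<in>{1..d}. 1 / (th 0 - th j))"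
    by (subst prod.distinct_set_conv_list[symmetric])
      (simp_all del: upt_Suc add: atLeastLessThanSuc_atLeastAtMost)
  also have "\<dots> = inverse (\<Prod>i\<in>{1..d}. th 0 - th i)"
    by (simp add: prod_dividef inverse_eq_divide)
  finally have tr: "mat_tr (prim_idem (Suc d) A th 0 * prim_idem (Suc d) As ths 0)
      = inverse (\<Prod>i\<in>{1..d}. th 0 - th i) * (\<Prod>k = 1..d. B $$ (k, k - 1))" .
  have "B $$ (k, k - 1) \<noteq> 0" if "k \<in> {1..d}" for k
    using that hess unfolding unreduced_hessenberg_def by (cases k) auto
  then have "(\<Prod>k = 1..d. B $$ (k, k - 1)) \<noteq> 0"
    by simp
  then show ?thesis
    unfolding tr by (simp add: inverse_mult_distrib)
qed

end

theorem theorem11p5: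
  fixes d :: nat and A As :: "'a::field mat" and E Es :: "nat \<Rightarrow> 'a mat"
    and th :: "nat \<Rightarrow> 'a" and u :: "'a vec" and B :: "'a mat"
  assumes LS: "leonard_system d A As E Es"
    and th: "eig_ordering (d+1) A th" "\<forall>i\<le>d. E i = prim_idem (d+1) A th i"
    and u: "u \<in> carrier_vec (d+1)" "u \<noteq> 0\<^sub>v (d+1)"
      "\<exists>w \<in> carrier_vec (d+1). u = E 0 *\<^sub>v w"
    and B: "represents_wrt (d+1) A (\<lambda>i. Es i *\<^sub>v u) B"
  shows "(\<Prod>i\<in>{1..d}. th 0 - th i)
           = inverse (mat_tr (E 0 * Es 0)) * (\<Prod>i\<in>{1..d}. B $$ (i, i - 1))"
proof -
  have A: "A \<in> carrier_mat (Suc d) (Suc d)" and As: "As \<in> carrier_mat (Suc d) (Suc d)"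
    using LS unfolding leonard_system_def mult_free_def by auto
  obtain ths where ths: "eig_ordering (Suc d) As ths" "\<forall>i<Suc d. Es i = prim_idem (Suc d) As ths i"
    using LS unfolding leonard_system_def idem_ordering_def by auto
  have E: "\<forall>i<Suc d. E i = prim_idem (Suc d) A th i"
    using th(2) by (simp add: less_Suc_eq_le)
  obtain P Q where PQ: "spectral_basis (Suc d) A th P Q"
    using spectral_basis_exists[OF A] th(1) by auto
  obtain Ps Qs where PsQs: "spectral_basis (Suc d) As ths Ps Qs"
    using spectral_basis_exists[OF As ths(1)] by auto
  have "unreduced_hessenberg (Suc d) (Qs * A * Ps)"
    using LS unfolding leonard_system_def
    by (intro tridiag_cond_unreduced_hessenberg[OF PsQs A ths(2)]) simp
  moreover have "unreduced_hessenberg (Suc d) (Q * As * P)"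
    using LS unfolding leonard_system_def
    by (intro tridiag_cond_unreduced_hessenberg[OF PQ As E]) simp
  ultimately interpret leonard_frame d A As th ths P Q Ps Qs
    using PQ PsQs by unfold_locales
  obtain w where w: "w \<in> carrier_vec (Suc d)" "u = prim_idem (Suc d) A th 0 *\<^sub>v w"
    using u(3) E by auto
  have "\<forall>i\<le>d. Es i *\<^sub>v u = prim_idem (Suc d) As ths i *\<^sub>v u"
    using ths(2) by simp
  then show ?thesis
    using eigenvalue_gap_product[OF w] u(2) B E ths(2) by simp
qed

end
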